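(* Let $G$ be a connected graph and $\varphi$ a $\mathbb{T}$-gain on $G$ such that $\varphi(\overrightarrow{E}(G))\subseteq\{a+ib\in\mathbb{T}:a\ge0\}$. Then $\lambda_1(A(\Phi))\le\rho(A(\Phi))\le3\lambda_1(A(\Phi))$, where $\Phi=(G,\varphi)$.
   Context: Graphs are finite, simple and undirected. $\mathbb{T}=\{z\in\mathbb{C}:|z|=1\}$. $\overrightarrow{E}(G)$ is the set of oriented edges ($\overrightarrow{e_{st}}$ and $\overrightarrow{e_{ts}}$ for each edge $e_{st}$). A $\mathbb{T}$-gain on $G$ is a map $\varphi:\overrightarrow{E}(G)\to\mathbb{T}$ with $\varphi(\overrightarrow{e_{ts}})=\varphi(\overrightarrow{e_{st}})^{-1}$. $A(\Phi)$ is the Hermitian matrix with $(s,t)$ entry $\varphi(\overrightarrow{e_{st}})$ if $v_s\sim v_t$, else $0$. $\lambda_1$ denotes the largest eigenvalue and $\rho$ the spectral radius. *)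

theory Defs
  imports "Jordan_Normal_Form.Spectral_Radius"
begin

definition simple_graph :: "nat \<Rightarrow> (nat \<Rightarrow> nat \<Rightarrow> bool) \<Rightarrow> bool" where
  "simple_graph n E \<longleftrightarrow>
     (\<forall>s t. E s t \<longrightarrow> s < n \<and> t < n) \<and>
     (\<forall>s t. E s t \<longrightarrow> E t s) \<and>
     (\<forall>s. \<not> E s s)"

definition connected_graph :: "nat \<Rightarrow> (nat \<Rightarrow> nat \<Rightarrow> bool) \<Rightarrow> bool" where
  "connected_graph n E \<longleftrightarrow> simple_graph n E \<and> n > 0 \<and>
     (\<forall>u v. u < n \<longrightarrow> v < n \<longrightarrow> E\<^sup>*\<^sup>* u v)"

text \<open>A T-gain: phi s t is the gain of the oriented edge from s to t.\<close>
definition T_gain :: "(nat \<Rightarrow> nat \<Rightarrow> bool) \<Rightarrow> (nat \<Rightarrow> nat \<Rightarrow> complex) \<Rightarrow> bool" where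
  "T_gain E \<phi> \<longleftrightarrow> (\<forall>s t. E s t \<longrightarrow> norm (\<phi> s t) = 1 \<and> \<phi> t s = inverse (\<phi> s t))"

definition gain_adj :: "nat \<Rightarrow> (nat \<Rightarrow> nat \<Rightarrow> bool) \<Rightarrow> (nat \<Rightarrow> nat \<Rightarrow> complex) \<Rightarrow> complex mat" where
  "gain_adj n E \<phi> = mat n n (\<lambda>(s, t). if E s t then \<phi> s t else 0)"

text \<open>Largest (real) eigenvalue of a complex matrix (meaningful for Hermitian matrices).\<close>
definition lambda1 :: "complex mat \<Rightarrow> real" where
  "lambda1 A = Max {x :: real. eigenvalue A (complex_of_real x)}"

end

theory Submission
  imports Defs "HOL-Analysis.Analysis"
begin

(* A(\<Phi>) is Hermitian, so \<lambda>\<^sub>1 is the maximum of the Rayleigh quotient y*Ay / |y|^2: the maximum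
   is attained on the compact unit sphere, and a maximiser is an eigenvector.  Now let Ay = \<mu>y.  The
   entrywise conjugate y' and the entrywise modulus |y| also have Rayleigh quotient at most \<lambda>\<^sub>1.
   All entries of A have nonnegative real part and y\<^sub>s cnj y\<^sub>t + cnj y\<^sub>s y\<^sub>t = 2 Re (cnj y\<^sub>s y\<^sub>t) is at
   least -2 |y\<^sub>s| |y\<^sub>t|, so y'*Ay' + y*Ay \<ge> -2 |y|*A|y|, that is,
   -\<mu> |y|^2 \<le> y'*Ay' + 2 |y|*A|y| \<le> 3 \<lambda>\<^sub>1 |y|^2. *)

text \<open>Vectors of \<open>\<complex>\<^sup>n\<close> are functions \<open>nat \<Rightarrow> complex\<close> of which only the values below \<open>n\<close>
  matter, and a kernel \<open>a\<close> stands for the matrix with entries \<open>a s t\<close>.\<close>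

definition cinner :: "nat \<Rightarrow> (nat \<Rightarrow> complex) \<Rightarrow> (nat \<Rightarrow> complex) \<Rightarrow> complex" where
  "cinner n y z = (\<Sum>s<n. cnj (y s) * z s)"

definition kernel_apply :: "nat \<Rightarrow> (nat \<Rightarrow> nat \<Rightarrow> complex) \<Rightarrow> (nat \<Rightarrow> complex) \<Rightarrow> nat \<Rightarrow> complex" where
  "kernel_apply n a z s = (\<Sum>t<n. a s t * z t)"

definition hermitian_kernel :: "nat \<Rightarrow> (nat \<Rightarrow> nat \<Rightarrow> complex) \<Rightarrow> bool" where
  "hermitian_kernel n a \<longleftrightarrow> (\<forall>s<n. \<forall>t<n. a t s = cnj (a s t))"

definition quad_form :: "nat \<Rightarrow> (nat \<Rightarrow> nat \<Rightarrow> complex) \<Rightarrow> (nat \<Rightarrow> complex) \<Rightarrow> real" where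
  "quad_form n a y = Re (cinner n y (kernel_apply n a y))"

definition vnorm2 :: "nat \<Rightarrow> (nat \<Rightarrow> complex) \<Rightarrow> real" where
  "vnorm2 n y = (\<Sum>s<n. (cmod (y s))\<^sup>2)"

lemma cinner_self: "cinner n y y = complex_of_real (vnorm2 n y)"
proof -
  have "cnj (y s) * y s = complex_of_real ((cmod (y s))\<^sup>2)" for s
    using complex_norm_square[of "y s"] by (simp add: mult.commute)
  then show ?thesis
    unfolding cinner_def vnorm2_def by simp
qed

lemma vnorm2_nonneg: "vnorm2 n y \<ge> 0"
  unfolding vnorm2_def by (intro sum_nonneg) auto

lemma vnorm2_eq_0_iff: "vnorm2 n y = 0 \<longleftrightarrow> (\<forall>s<n. y s = 0)"
  unfolding vnorm2_def by (subst sum_nonneg_eq_0_iff) auto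

lemma vnorm2_pos_iff: "vnorm2 n y > 0 \<longleftrightarrow> (\<exists>s<n. y s \<noteq> 0)"
  using vnorm2_nonneg[of n y] by (auto simp: less_le vnorm2_eq_0_iff)

lemma norm_le_vnorm2: "s < n \<Longrightarrow> (cmod (y s))\<^sup>2 \<le> vnorm2 n y"
  unfolding vnorm2_def by (rule member_le_sum) auto

lemma vnorm2_cong: "(\<And>s. s < n \<Longrightarrow> y s = y' s) \<Longrightarrow> vnorm2 n y = vnorm2 n y'"
  unfolding vnorm2_def by (intro sum.cong) auto

lemma quad_form_cong: "(\<And>s. s < n \<Longrightarrow> y s = y' s) \<Longrightarrow> quad_form n a y = quad_form n a y'"
  unfolding quad_form_def cinner_def kernel_apply_def by (intro arg_cong[where f = Re] sum.cong) auto

lemma vnorm2_scale: "vnorm2 n (\<lambda>s. c * y s) = (cmod c)\<^sup>2 * vnorm2 n y"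
  unfolding vnorm2_def by (simp add: sum_distrib_left norm_mult power_mult_distrib)

lemma quad_form_scale: "quad_form n a (\<lambda>s. c * y s) = (cmod c)\<^sup>2 * quad_form n a y"
proof -
  have "cinner n (\<lambda>s. c * y s) (kernel_apply n a (\<lambda>s. c * y s))
      = complex_of_real ((cmod c)\<^sup>2) * cinner n y (kernel_apply n a y)"
    unfolding cinner_def kernel_apply_def complex_norm_square
    by (simp add: sum_distrib_left mult_ac)
  then show ?thesis
    unfolding quad_form_def by simp
qed

lemma quad_form_eq_double_sum:
  "quad_form n a y = (\<Sum>s<n. \<Sum>t<n. Re (cnj (y s) * a s t * y t))"
  unfolding quad_form_def cinner_def kernel_apply_def by (simp add: sum_distrib_left mult.assoc)

lemma cinner_scale_real_left:
  "cinner n (\<lambda>s. complex_of_real t * y s) z = complex_of_real t * cinner n y z"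
  unfolding cinner_def by (simp add: sum_distrib_left mult_ac)

lemma hermitian_kernel_cnj:
  assumes "hermitian_kernel n a" and "s < n" and "t < n"
  shows "cnj (a s t) = a t s"
  using assms unfolding hermitian_kernel_def by (metis complex_cnj_cnj)

lemma cinner_kernel_apply_swap:
  assumes herm: "hermitian_kernel n a"
  shows "cinner n z (kernel_apply n a y) = cnj (cinner n y (kernel_apply n a z))"
proof -
  have "cnj (cinner n y (kernel_apply n a z)) = (\<Sum>s<n. \<Sum>t<n. y s * cnj (a s t) * cnj (z t))"
    unfolding cinner_def kernel_apply_def by (simp add: sum_distrib_left mult.assoc)
  also have "\<dots> = (\<Sum>s<n. \<Sum>t<n. y s * a t s * cnj (z t))"
    by (intro sum.cong refl) (simp add: hermitian_kernel_cnj[OF herm])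
  also have "\<dots> = (\<Sum>t<n. \<Sum>s<n. y s * a t s * cnj (z t))"
    by (rule sum.swap)
  also have "\<dots> = cinner n z (kernel_apply n a y)"
    unfolding cinner_def kernel_apply_def by (simp add: sum_distrib_left mult_ac)
  finally show ?thesis by simp
qed

lemma quad_form_add:
  assumes herm: "hermitian_kernel n a"
  shows "quad_form n a (\<lambda>s. y s + z s)
           = quad_form n a y + 2 * Re (cinner n z (kernel_apply n a y)) + quad_form n a z"
proof -
  have "cinner n (\<lambda>s. y s + z s) (kernel_apply n a (\<lambda>s. y s + z s))
      = cinner n y (kernel_apply n a y) + cinner n y (kernel_apply n a z)
        + cinner n z (kernel_apply n a y) + cinner n z (kernel_apply n a z)"
    unfolding cinner_def kernel_apply_def by (simp add: algebra_simps sum.distrib)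
  then show ?thesis
    unfolding quad_form_def using cinner_kernel_apply_swap[OF herm, where y = z and z = y] by simp
qed

lemma vnorm2_add: "vnorm2 n (\<lambda>s. y s + z s) = vnorm2 n y + 2 * Re (cinner n z y) + vnorm2 n z"
proof -
  have "(cmod (y s + z s))\<^sup>2 = (cmod (y s))\<^sup>2 + 2 * Re (cnj (z s) * y s) + (cmod (z s))\<^sup>2" for s
    unfolding cmod_power2 by (simp add: power2_eq_square algebra_simps)
  then show ?thesis
    unfolding vnorm2_def cinner_def by (simp add: sum.distrib sum_distrib_left)
qed

lemma eigenvector_cinner:
  assumes "\<forall>s<n. kernel_apply n a y s = \<mu> * y s"
  shows "cinner n y (kernel_apply n a y) = \<mu> * complex_of_real (vnorm2 n y)"
proof -
  have "cinner n y (kernel_apply n a y) = \<mu> * cinner n y y"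
    unfolding cinner_def using assms by (simp add: sum_distrib_left mult_ac)
  then show ?thesis
    by (simp add: cinner_self)
qed

subsection \<open>The maximum of the Rayleigh quotient\<close>

text \<open>The box condition is implied by the norm condition; it exhibits the sphere as a closed
  subset of a compact product.\<close>

definition unit_sphere :: "nat \<Rightarrow> (nat \<Rightarrow> complex) set" where
  "unit_sphere n = {y. (\<forall>s. y s \<in> (if s < n then cball 0 1 else {0})) \<and> vnorm2 n y = 1}"

lemma compact_unit_sphere: "compact (unit_sphere n)"
proof -
  have "compactin (product_topology (\<lambda>_. euclidean) UNIV)
          (PiE UNIV (\<lambda>s::nat. if s < n then cball (0::complex) 1 else {0}))"
    by (subst compactin_PiE) auto
  then have "compact {y :: nat \<Rightarrow> complex. \<forall>s. y s \<in> (if s < n then cball 0 1 else {0})}"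
    by (simp add: euclidean_product_topology PiE_UNIV_domain Pi_def)
  moreover have "closed {y. vnorm2 n y = 1}"
    unfolding vnorm2_def
    by (intro closed_Collect_eq continuous_intros continuous_on_product_coordinates)
  ultimately show ?thesis
    unfolding unit_sphere_def Collect_conj_eq by (rule compact_Int_closed)
qed

lemma truncate_mem_unit_sphere:
  assumes "vnorm2 n y = 1"
  shows "(\<lambda>s. if s < n then y s else 0) \<in> unit_sphere n"
proof -
  have "vnorm2 n (\<lambda>s. if s < n then y s else 0) = 1"
    using vnorm2_cong[of n _ y] assms by simp
  moreover have "cmod (y s) \<le> 1" if "s < n" for s
    using norm_le_vnorm2[OF that, of y] assms by (simp add: power_le_one_iff)
  ultimately show ?thesis
    unfolding unit_sphere_def by auto
qed

lemma quad_form_eq_0: "vnorm2 n y = 0 \<Longrightarrow> quad_form n a y = 0"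
  by (simp add: quad_form_eq_double_sum vnorm2_eq_0_iff)

lemma quad_form_le_of_unit_sphere:
  assumes "\<And>y. vnorm2 n y = 1 \<Longrightarrow> quad_form n a y \<le> M"
  shows "quad_form n a y \<le> M * vnorm2 n y"
proof (cases "vnorm2 n y = 0")
  case True
  then show ?thesis
    by (simp add: quad_form_eq_0)
next
  case False
  then have pos: "vnorm2 n y > 0"
    using vnorm2_nonneg[of n y] by linarith
  define c where "c = 1 / complex_of_real (sqrt (vnorm2 n y))"
  have c2: "(cmod c)\<^sup>2 = 1 / vnorm2 n y"
    unfolding c_def using pos by (simp add: norm_divide power_divide)
  have "quad_form n a y / vnorm2 n y = quad_form n a (\<lambda>s. c * y s)"
    by (simp add: quad_form_scale c2)
  also have "\<dots> \<le> M"
    using pos by (intro assms) (simp add: vnorm2_scale c2)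
  finally show ?thesis
    using pos by (simp add: divide_le_eq mult.commute)
qed

lemma quad_form_attains_max:
  assumes "n > 0"
  obtains v where "vnorm2 n v = 1" and "\<And>y. quad_form n a y \<le> quad_form n a v * vnorm2 n y"
proof -
  have "vnorm2 n (\<lambda>s. if s = 0 then 1 else 0) = (\<Sum>s<n. if s = 0 then 1 else 0)"
    unfolding vnorm2_def by (intro sum.cong) auto
  also have "\<dots> = 1"
    using assms by simp
  finally have "unit_sphere n \<noteq> {}"
    using truncate_mem_unit_sphere by blast
  moreover have "continuous_on (unit_sphere n) (quad_form n a)"
    unfolding quad_form_def cinner_def kernel_apply_def
    by (intro continuous_intros continuous_on_subset[OF continuous_on_product_coordinates]) auto
  ultimately obtain v where v: "v \<in> unit_sphere n"
    and v_max: "\<And>y. y \<in> unit_sphere n \<Longrightarrow> quad_form n a y \<le> quad_form n a v"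
    using continuous_attains_sup[OF compact_unit_sphere] by blast
  have v_max_norm: "quad_form n a y \<le> quad_form n a v" if "vnorm2 n y = 1" for y
  proof -
    have "quad_form n a y = quad_form n a (\<lambda>s. if s < n then y s else 0)"
      by (rule quad_form_cong) simp
    then show ?thesis
      using v_max[OF truncate_mem_unit_sphere[OF that]] by simp
  qed
  show ?thesis
  proof (rule that)
    show "vnorm2 n v = 1"
      using v unfolding unit_sphere_def by simp
    show "quad_form n a y \<le> quad_form n a v * vnorm2 n y" for y
      using v_max_norm by (rule quad_form_le_of_unit_sphere)
  qed
qed

lemma linear_term_vanishes:
  fixes b d :: real
  assumes "\<And>t. t * b + t\<^sup>2 * d \<le> 0"
  shows "b = 0"
proof -
  define t where "t = b / (\<bar>d\<bar> + 1)"
  have "b = t * (\<bar>d\<bar> + 1)"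
    unfolding t_def by (simp add: add_nonneg_eq_0_iff)
  then have "t * b + t\<^sup>2 * d = t\<^sup>2 * (\<bar>d\<bar> + 1 + d)"
    by (simp add: power2_eq_square algebra_simps)
  moreover have "\<bar>d\<bar> + 1 + d > 0"
    by linarith
  ultimately have "t = 0"
    using assms[of t] by (simp add: mult_le_0_iff)
  then show ?thesis
    using \<open>b = t * (\<bar>d\<bar> + 1)\<close> by simp
qed

text \<open>The first variation of the Rayleigh quotient at \<open>v\<close> in the direction of the residual
  \<open>w = Av - Mv\<close> is \<open>|w|^2\<close>.\<close>

lemma quad_form_maximiser_eigenvector:
  assumes herm: "hermitian_kernel n a"
    and bound: "\<And>y. quad_form n a y \<le> M * vnorm2 n y"
    and attained: "quad_form n a v = M * vnorm2 n v"
    and "s < n"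
  shows "kernel_apply n a v s = complex_of_real M * v s"
proof -
  define w where "w = (\<lambda>s. kernel_apply n a v s - complex_of_real M * v s)"
  have residual: "Re (cinner n w (kernel_apply n a v)) - M * Re (cinner n w v) = vnorm2 n w"
  proof -
    have "cinner n w (kernel_apply n a v) - complex_of_real M * cinner n w v = cinner n w w"
      unfolding cinner_def w_def by (simp add: sum_distrib_left sum_subtractf algebra_simps)
    then have "Re (cinner n w (kernel_apply n a v) - complex_of_real M * cinner n w v) = vnorm2 n w"
      by (simp add: cinner_self)
    then show ?thesis
      by simp
  qed
  have "t * (2 * vnorm2 n w) + t\<^sup>2 * (quad_form n a w - M * vnorm2 n w) \<le> 0" for t
  proof -
    let ?tw = "\<lambda>s. complex_of_real t * w s"
    have "quad_form n a (\<lambda>s. v s + ?tw s)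
        = M * vnorm2 n v + 2 * t * Re (cinner n w (kernel_apply n a v)) + t\<^sup>2 * quad_form n a w"
      unfolding quad_form_add[OF herm] cinner_scale_real_left quad_form_scale attained by simp
    moreover have "vnorm2 n (\<lambda>s. v s + ?tw s)
        = vnorm2 n v + 2 * t * Re (cinner n w v) + t\<^sup>2 * vnorm2 n w"
      unfolding vnorm2_add cinner_scale_real_left vnorm2_scale by simp
    ultimately show ?thesis
      using bound[of "\<lambda>s. v s + ?tw s"] residual by (simp add: algebra_simps)
  qed
  then have "vnorm2 n w = 0"
    using linear_term_vanishes by (metis mult_eq_0_iff zero_neq_numeral)
  then show ?thesis
    using \<open>s < n\<close> by (simp add: vnorm2_eq_0_iff w_def)
qed

subsection \<open>Bounds on the eigenvalues\<close>

lemma hermitian_eigenvalue_real: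
  assumes herm: "hermitian_kernel n a"
    and eig: "\<forall>s<n. kernel_apply n a y s = \<mu> * y s"
    and "vnorm2 n y > 0"
  shows "Im \<mu> = 0"
proof -
  have "Im (cinner n y (kernel_apply n a y)) = 0"
    using cinner_kernel_apply_swap[OF herm, of y y] by (metis cnj.sel(2) neg_equal_zero)
  then show ?thesis
    using assms(3) unfolding eigenvector_cinner[OF eig] by simp
qed

lemma eigenvalue_le_quad_form_bound:
  assumes bound: "\<And>y. quad_form n a y \<le> M * vnorm2 n y"
    and eig: "\<forall>s<n. kernel_apply n a y s = \<mu> * y s"
    and "vnorm2 n y > 0"
  shows "Re \<mu> \<le> M"
proof -
  have "Re \<mu> * vnorm2 n y \<le> M * vnorm2 n y"
    using bound[of y] unfolding quad_form_def eigenvector_cinner[OF eig] by simp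
  then show ?thesis
    using assms(3) by simp
qed

lemma Re_mult_conj_pair: "Re (y * a * cnj z) + Re (cnj y * a * z) = 2 * Re a * Re (cnj y * z)"
proof -
  have "y * cnj z + cnj y * z = complex_of_real (2 * Re (cnj y * z))"
    by (simp add: complex_eq_iff algebra_simps)
  then have "y * a * cnj z + cnj y * a * z = a * complex_of_real (2 * Re (cnj y * z))"
    by (metis distrib_left mult.commute mult.left_commute)
  then have "Re (y * a * cnj z + cnj y * a * z) = 2 * Re a * Re (cnj y * z)"
    by simp
  then show ?thesis
    by simp
qed

lemma quad_form_conj_add_ge:
  assumes "\<forall>s<n. \<forall>t<n. Re (a s t) \<ge> 0"
  shows "quad_form n a (\<lambda>s. cnj (y s)) + quad_form n a y
           \<ge> - 2 * quad_form n a (\<lambda>s. complex_of_real (cmod (y s)))"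
proof -
  have "- 2 * (Re (a s t) * (cmod (y s) * cmod (y t)))
          \<le> Re (y s * a s t * cnj (y t)) + Re (cnj (y s) * a s t * y t)"
    if "s < n" "t < n" for s t
  proof -
    have "- Re (cnj (y s) * y t) \<le> cmod (y s) * cmod (y t)"
      using abs_Re_le_cmod[of "cnj (y s) * y t"] by (simp add: norm_mult)
    then have "Re (a s t) * - Re (cnj (y s) * y t) \<le> Re (a s t) * (cmod (y s) * cmod (y t))"
      by (rule mult_left_mono) (use assms that in simp)
    then have "- (Re (a s t) * (cmod (y s) * cmod (y t))) \<le> Re (a s t) * Re (cnj (y s) * y t)"
      unfolding mult_minus_right by linarith
    then show ?thesis
      unfolding Re_mult_conj_pair by linarith
  qed
  then have "(\<Sum>s<n. \<Sum>t<n. - 2 * (Re (a s t) * (cmod (y s) * cmod (y t))))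
      \<le> (\<Sum>s<n. \<Sum>t<n. Re (y s * a s t * cnj (y t)) + Re (cnj (y s) * a s t * y t))"
    by (intro sum_mono) simp
  moreover have "quad_form n a (\<lambda>s. cnj (y s)) + quad_form n a y
      = (\<Sum>s<n. \<Sum>t<n. Re (y s * a s t * cnj (y t)) + Re (cnj (y s) * a s t * y t))"
    by (simp only: quad_form_eq_double_sum complex_cnj_cnj sum.distrib)
  moreover have "- 2 * quad_form n a (\<lambda>s. complex_of_real (cmod (y s)))
      = (\<Sum>s<n. \<Sum>t<n. - 2 * (Re (a s t) * (cmod (y s) * cmod (y t))))"
    unfolding quad_form_eq_double_sum sum_distrib_left by (intro sum.cong refl) (simp add: mult_ac)
  ultimately show ?thesis
    by linarith
qed

lemma eigenvalue_ge_neg_three_quad_form_bound: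
  assumes nonneg: "\<forall>s<n. \<forall>t<n. Re (a s t) \<ge> 0"
    and bound: "\<And>y. quad_form n a y \<le> M * vnorm2 n y"
    and eig: "\<forall>s<n. kernel_apply n a y s = \<mu> * y s"
    and "vnorm2 n y > 0"
  shows "- Re \<mu> \<le> 3 * M"
proof -
  have "quad_form n a (\<lambda>s. cnj (y s)) \<le> M * vnorm2 n y"
    using bound[of "\<lambda>s. cnj (y s)"] by (simp add: vnorm2_def)
  moreover have "quad_form n a (\<lambda>s. complex_of_real (cmod (y s))) \<le> M * vnorm2 n y"
    using bound[of "\<lambda>s. complex_of_real (cmod (y s))"] by (simp add: vnorm2_def)
  moreover have "quad_form n a y = Re \<mu> * vnorm2 n y"
    unfolding quad_form_def eigenvector_cinner[OF eig] by simp
  ultimately have "(- Re \<mu>) * vnorm2 n y \<le> (3 * M) * vnorm2 n y"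
    using quad_form_conj_add_ge[OF nonneg, of y] by linarith
  then show ?thesis
    using assms(4) mult_le_cancel_right_pos by blast
qed

lemma eigenvalue_iff_kernel_eigenvector:
  assumes A: "A \<in> carrier_mat n n"
  shows "eigenvalue A \<mu> \<longleftrightarrow>
    (\<exists>y. vnorm2 n y > 0 \<and> (\<forall>s<n. kernel_apply n (\<lambda>s t. A $$ (s, t)) y s = \<mu> * y s))"
proof -
  have mult: "(A *\<^sub>v Matrix.vec n y) $ s = kernel_apply n (\<lambda>s t. A $$ (s, t)) y s" if "s < n" for y s
    using A that by (simp add: mult_mat_vec_def scalar_prod_def kernel_apply_def atLeast0LessThan)
  show ?thesis
  proof
    assume "eigenvalue A \<mu>"
    then obtain x where x: "x \<in> carrier_vec n" "x \<noteq> 0\<^sub>v n" "A *\<^sub>v x = \<mu> \<cdot>\<^sub>v x"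
      using A unfolding eigenvalue_def eigenvector_def by auto
    have x_vec: "x = Matrix.vec n (($) x)"
      using x(1) by auto
    have "vnorm2 n (($) x) > 0"
      using x(1,2) unfolding vnorm2_pos_iff by (metis eq_vecI index_zero_vec carrier_vecD)
    moreover have "kernel_apply n (\<lambda>s t. A $$ (s, t)) (($) x) s = \<mu> * x $ s" if "s < n" for s
      using mult[OF that, of "($) x"] x that by (simp flip: x_vec)
    ultimately show "\<exists>y. vnorm2 n y > 0 \<and> (\<forall>s<n. kernel_apply n (\<lambda>s t. A $$ (s, t)) y s = \<mu> * y s)"
      by blast
  next
    assume "\<exists>y. vnorm2 n y > 0 \<and> (\<forall>s<n. kernel_apply n (\<lambda>s t. A $$ (s, t)) y s = \<mu> * y s)"
    then obtain y where y: "vnorm2 n y > 0" "\<forall>s<n. kernel_apply n (\<lambda>s t. A $$ (s, t)) y s = \<mu> * y s"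
      by blast
    have "Matrix.vec n y \<noteq> 0\<^sub>v n"
      using y(1) unfolding vnorm2_pos_iff by (metis index_vec index_zero_vec(1))
    moreover have "A *\<^sub>v Matrix.vec n y = \<mu> \<cdot>\<^sub>v Matrix.vec n y"
      using A y(2) mult by (intro eq_vecI) auto
    ultimately show "eigenvalue A \<mu>"
      using A vec_carrier unfolding eigenvalue_def eigenvector_def by blast
  qed
qed

lemma lambda1_eqI:
  assumes A: "A \<in> carrier_mat n n"
    and "eigenvalue A (complex_of_real M)"
    and "\<And>x. eigenvalue A (complex_of_real x) \<Longrightarrow> x \<le> M"
  shows "lambda1 A = M"
  unfolding lambda1_def
proof (rule Max_eqI)
  have "{x. eigenvalue A (complex_of_real x)} \<subseteq> Re ` spectrum A"
    unfolding spectrum_def by (auto intro: image_eqI[where x = "complex_of_real _"])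
  then show "finite {x. eigenvalue A (complex_of_real x)}"
    using card_finite_spectrum(1)[OF A] finite_subset by blast
qed (use assms in auto)

lemma norm_eigenvalue_le_spectral_radius:
  assumes "A \<in> carrier_mat n n" and "n > 0" and "eigenvalue A \<mu>"
  shows "cmod \<mu> \<le> spectral_radius A"
  using spectral_radius_mem_max(2)[OF assms(1,2)] assms(3) unfolding spectrum_def by blast

lemma spectral_radius_le:
  assumes "A \<in> carrier_mat n n" and "n > 0" and "\<And>\<mu>. eigenvalue A \<mu> \<Longrightarrow> cmod \<mu> \<le> c"
  shows "spectral_radius A \<le> c"
  using spectral_radius_mem_max(1)[OF assms(1,2)] assms(3) unfolding spectrum_def by force

lemma hermitian_lambda1_max_quad_form:
  assumes A: "A \<in> carrier_mat n n" and n: "n > 0"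
    and herm: "hermitian_kernel n (\<lambda>s t. A $$ (s, t))"
  shows "eigenvalue A (complex_of_real (lambda1 A))"
    and "\<And>y. quad_form n (\<lambda>s t. A $$ (s, t)) y \<le> lambda1 A * vnorm2 n y"
proof -
  let ?a = "\<lambda>s t. A $$ (s, t)"
  obtain v where v: "vnorm2 n v = 1" and bound: "\<And>y. quad_form n ?a y \<le> quad_form n ?a v * vnorm2 n y"
    using quad_form_attains_max[OF n] by blast
  define M where "M = quad_form n ?a v"
  have "eigenvalue A (complex_of_real M)"
    unfolding eigenvalue_iff_kernel_eigenvector[OF A]
    using v quad_form_maximiser_eigenvector[OF herm bound, of v] by (intro exI[of _ v]) (auto simp: M_def)
  moreover have "x \<le> M" if "eigenvalue A (complex_of_real x)" for x
    using that eigenvalue_le_quad_form_bound[OF bound] unfolding eigenvalue_iff_kernel_eigenvector[OF A]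
    by (fastforce simp: M_def)
  ultimately have "lambda1 A = M"
    by (rule lambda1_eqI[OF A])
  with \<open>eigenvalue A M\<close> bound show "eigenvalue A (complex_of_real (lambda1 A))"
    and "\<And>y. quad_form n ?a y \<le> lambda1 A * vnorm2 n y"
    by (simp_all add: M_def)
qed

lemma hermitian_lambda1_le_spectral_radius:
  assumes "A \<in> carrier_mat n n" and "n > 0" and "hermitian_kernel n (\<lambda>s t. A $$ (s, t))"
  shows "lambda1 A \<le> spectral_radius A"
  using norm_eigenvalue_le_spectral_radius[OF assms(1,2) hermitian_lambda1_max_quad_form(1)[OF assms]]
  by simp

lemma hermitian_spectral_radius_le_three_lambda1:
  assumes A: "A \<in> carrier_mat n n" and n: "n > 0"
    and herm: "hermitian_kernel n (\<lambda>s t. A $$ (s, t))"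
    and nonneg: "\<forall>s<n. \<forall>t<n. Re (A $$ (s, t)) \<ge> 0"
  shows "spectral_radius A \<le> 3 * lambda1 A"
proof (rule spectral_radius_le[OF A n])
  fix \<mu>
  assume "eigenvalue A \<mu>"
  then obtain y where y: "vnorm2 n y > 0" "\<forall>s<n. kernel_apply n (\<lambda>s t. A $$ (s, t)) y s = \<mu> * y s"
    unfolding eigenvalue_iff_kernel_eigenvector[OF A] by blast
  note bound = hermitian_lambda1_max_quad_form(2)[OF A n herm]
  have "Im \<mu> = 0"
    using hermitian_eigenvalue_real[OF herm y(2,1)] .
  moreover have "Re \<mu> \<le> lambda1 A"
    using eigenvalue_le_quad_form_bound[OF bound y(2,1)] .
  moreover have "- Re \<mu> \<le> 3 * lambda1 A"
    using eigenvalue_ge_neg_three_quad_form_bound[OF nonneg bound y(2,1)] .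
  ultimately show "cmod \<mu> \<le> 3 * lambda1 A"
    by (simp add: cmod_def abs_le_iff)
qed

lemma T_gain_cnj:
  assumes "T_gain E \<phi>" and "E s t"
  shows "cnj (\<phi> s t) = \<phi> t s"
proof -
  have "cmod (\<phi> s t) = 1" and inv: "\<phi> t s = inverse (\<phi> s t)"
    using assms unfolding T_gain_def by auto
  then have "\<phi> s t * cnj (\<phi> s t) = 1"
    using complex_norm_square[of "\<phi> s t"] by simp
  then show ?thesis
    unfolding inv by (rule inverse_unique[symmetric])
qed

lemma gain_adj_hermitian:
  assumes "simple_graph n E" and "T_gain E \<phi>"
  shows "hermitian_kernel n (\<lambda>s t. gain_adj n E \<phi> $$ (s, t))"
proof -
  have "E t s \<longleftrightarrow> E s t" for s t
    using assms(1) unfolding simple_graph_def by blast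
  then show ?thesis
    using T_gain_cnj[OF assms(2)] unfolding hermitian_kernel_def gain_adj_def by simp
qed

theorem theorem5p1:
  fixes n :: nat and E :: "nat \<Rightarrow> nat \<Rightarrow> bool" and \<phi> :: "nat \<Rightarrow> nat \<Rightarrow> complex"
  assumes "connected_graph n E"
    and "T_gain E \<phi>"
    and "\<forall>s t. E s t \<longrightarrow> Re (\<phi> s t) \<ge> 0"
  shows "lambda1 (gain_adj n E \<phi>) \<le> spectral_radius (gain_adj n E \<phi>) \<and>
         spectral_radius (gain_adj n E \<phi>) \<le> 3 * lambda1 (gain_adj n E \<phi>)"
proof -
  have A: "gain_adj n E \<phi> \<in> carrier_mat n n" and n: "n > 0" and "simple_graph n E"
    using assms(1) unfolding gain_adj_def connected_graph_def by auto
  have herm: "hermitian_kernel n (\<lambda>s t. gain_adj n E \<phi> $$ (s, t))"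
    using gain_adj_hermitian[OF \<open>simple_graph n E\<close> assms(2)] .
  have "\<forall>s<n. \<forall>t<n. Re (gain_adj n E \<phi> $$ (s, t)) \<ge> 0"
    using assms(3) unfolding gain_adj_def by simp
  then show ?thesis
    using hermitian_lambda1_le_spectral_radius[OF A n herm]
      hermitian_spectral_radius_le_three_lambda1[OF A n herm]
    by blast
qed

end
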